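(* For all integers $m\ge1$ and $0\le k\le m-1$, the polynomials $G_{m,k}(q)$ and $H_{m,k}(q)$ have symmetric coefficients.
   Context: A polynomial $a_0+a_1x+\cdots+a_nx^n$ of degree $n$ has symmetric coefficients if $a_i=a_{n-i}$ for $0\le i\le n$. $q$ is an indeterminate with square root $q^{1/2}$, $[k]=\frac{1-q^k}{1-q}$. Let $T_{m,n}(q)=\sum_{k=1}^n(-1)^{n-k}[k]^mq^{\frac m2(n-k)}$. The polynomials $G_{m,j},H_{m,j}\in\mathbb{Z}[q]$ ($m\ge1$, $0\le j\le m-1$) are those (shown to exist by Guo and Zeng, and uniquely determined) such that for all $n\ge1$: $T_{2m,n}(q)=\sum_{k=1}^m(-q^n)^{m-k}\frac{G_{m,m-k}(q)}{\prod_{i=0}^{m-k}(1+q^{m-i})}([n][n+1])^k$, and $T_{2m-1,n}(q)=(-1)^{m+n}H_{m,m-1}(q^{\frac12})\frac{q^{(m-\frac12)n}}{(1+q^{\frac12})^m\prod_{i=0}^{m-1}(1+q^{m-i-\frac12})}+\frac{1-q^{n+\frac12}}{1-q^{\frac12}}\sum_{k=1}^m(-q^n)^{m-k}\frac{H_{m,m-k}(q^{\frac12})([n][n+1])^{k-1}}{(1+q^{\frac12})^{m-k+1}\prod_{i=0}^{m-k}(1+q^{m-i-\frac12})}$. *)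

theory Defs
  imports "HOL-Computational_Algebra.Polynomial" Complex_Main
begin

definition sym_coeffs :: "'a::zero poly \<Rightarrow> bool" where
  "sym_coeffs p \<longleftrightarrow> (\<forall>i \<le> degree p. coeff p i = coeff p (degree p - i))"

definition qint :: "real \<Rightarrow> nat \<Rightarrow> real" where
  "qint q k = (1 - q ^ k) / (1 - q)"

text \<open>T_(m,n)(q) evaluated at q = t^2, so that q^(1/2) = t and
  q^((m/2)(n-k)) = t^(m(n-k)).\<close>
definition T :: "nat \<Rightarrow> nat \<Rightarrow> real \<Rightarrow> real" where
  "T m n t = (\<Sum>k = 1..n. (-1) ^ (n - k) * (qint (t ^ 2) k) ^ m * t ^ (m * (n - k)))"

definition evalp :: "int poly \<Rightarrow> real \<Rightarrow> real" where
  "evalp p x = poly (map_poly real_of_int p) x"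

text \<open>The even identity defining G_(m,j) (G j stands for G_(m,j)), at q = t^2.\<close>
definition G_identity :: "nat \<Rightarrow> (nat \<Rightarrow> int poly) \<Rightarrow> bool" where
  "G_identity m G \<longleftrightarrow> (\<forall>n \<ge> 1. \<forall>t::real. t > 0 \<and> t \<noteq> 1 \<longrightarrow>
     T (2 * m) n t =
       (\<Sum>k = 1..m. (- ((t ^ 2) ^ n)) ^ (m - k) * evalp (G (m - k)) (t ^ 2)
          / (\<Prod>i = 0..m - k. 1 + (t ^ 2) ^ (m - i))
          * (qint (t ^ 2) n * qint (t ^ 2) (n + 1)) ^ k))"

text \<open>The odd identity defining H_(m,j) (H j stands for H_(m,j)), at q = t^2,
  q^(1/2) = t; q^(m-i-1/2) = t^(2(m-i)-1), q^((m-1/2)n) = t^((2m-1)n).\<close>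
definition H_identity :: "nat \<Rightarrow> (nat \<Rightarrow> int poly) \<Rightarrow> bool" where
  "H_identity m H \<longleftrightarrow> (\<forall>n \<ge> 1. \<forall>t::real. t > 0 \<and> t \<noteq> 1 \<longrightarrow>
     T (2 * m - 1) n t =
       (-1) ^ (m + n) * evalp (H (m - 1)) t * t ^ ((2 * m - 1) * n)
         / ((1 + t) ^ m * (\<Prod>i = 0..m - 1. 1 + t ^ (2 * (m - i) - 1)))
       + (1 - t ^ (2 * n + 1)) / (1 - t) *
         (\<Sum>k = 1..m. (- ((t ^ 2) ^ n)) ^ (m - k) * evalp (H (m - k)) t
            * (qint (t ^ 2) n * qint (t ^ 2) (n + 1)) ^ (k - 1)
            / ((1 + t) ^ (m - k + 1) * (\<Prod>i = 0..m - k. 1 + t ^ (2 * (m - i) - 1)))))"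

end

theory Submission
  imports Defs
begin

text \<open>
  Put \<open>q = t\<^sup>2\<close> and, for even \<open>n\<close>, \<open>s = t\<^sup>n\<close>. Both sides of each identity are then
  polynomials in \<open>s\<close> with coefficients depending on \<open>t\<close>: \<open>T\<close> expands binomially into the
  powers \<open>s^(2r)\<close> and \<open>s^M\<close>, and as \<open>(1 - q)\<^sup>2 [n][n+1] = (1 - s\<^sup>2)(1 - q s\<^sup>2)\<close>, the right-hand
  sides are combinations of the polynomials \<open>s^(2j) ((1 - s\<^sup>2)(1 - q s\<^sup>2))^k\<close>, which are
  triangular with respect to the even coefficients. Since the two sides agree for infinitely
  many \<open>s\<close>, the values \<open>G\<^sub>m\<^sub>,\<^sub>j(q)\<close> and \<open>H\<^sub>m\<^sub>,\<^sub>j(t)\<close> are determined by \<open>T\<close>.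

  Replacing \<open>t\<close> by \<open>1/t\<close> multiplies \<open>T\<^sub>M\<^sub>,\<^sub>n\<close> by \<open>t^(-2M(n-1))\<close> and turns each right-hand side
  into one of the same shape, with \<open>G\<^sub>m\<^sub>,\<^sub>j(1/q)\<close> resp. \<open>H\<^sub>m\<^sub>,\<^sub>j(1/t)\<close> times a power of \<open>t\<close> in
  place of \<open>G\<^sub>m\<^sub>,\<^sub>j(q)\<close> resp. \<open>H\<^sub>m\<^sub>,\<^sub>j(t)\<close>. By uniqueness, each of these polynomials \<open>p\<close> obeys
  a law \<open>x^\<alpha> p(x) = x^\<beta> p(1/x)\<close>. Letting \<open>t \<rightarrow> 0\<close> and comparing even coefficients yields a
  triangular system whose solution, by \<open>\<Sum>\<^sub>j (a+j choose j)(b-j choose i-j) = (a+b+1 choose i)\<close>,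
  is \<open>p(0) = (m-1+j choose j) \<noteq> 0\<close>. A polynomial with nonzero constant term obeying such a
  law is palindromic.
\<close>

section \<open>Finite sums and triangular systems\<close>

lemma sum_atLeast1_atMost_reverse: "(\<Sum>k=1..m. f k) = (\<Sum>j<m. f (m - j :: nat))"
  by (rule sum.reindex_bij_witness[where i = "\<lambda>k. m - k" and j = "\<lambda>j. m - j"]) auto

lemma prod_one_plus_power_inverse:
  fixes x :: real
  assumes "x \<noteq> 0"
  shows "(\<Prod>i\<in>A. 1 + (1/x)^(f i)) * x^(\<Sum>i\<in>A. f i) = (\<Prod>i\<in>A. 1 + x^(f i))"
proof -
  have "(\<Prod>i\<in>A. 1 + (1/x)^(f i)) * x^(\<Sum>i\<in>A. f i) = (\<Prod>i\<in>A. (1 + (1/x)^(f i)) * x^(f i))"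
    by (simp add: power_sum prod.distrib)
  also have "\<dots> = (\<Prod>i\<in>A. 1 + x^(f i))"
    using assms by (intro prod.cong refl) (simp add: field_simps)
  finally show ?thesis .
qed

lemma alternating_sum_powers:
  fixes a w :: "'a::comm_ring_1"
  shows "(w + a) * (\<Sum>k=1..n. (-1)^(n-k) * a^k * w^(n-k)) = a * (a^n - (-1)^n * w^n)"
proof -
  define S where "S n = (\<Sum>k=1..n. (-1)^(n-k) * a^k * w^(n-k))" for n
  have S_Suc: "S (Suc n) = a^Suc n - w * S n" for n
  proof -
    have "(\<Sum>k=1..n. (-1)^(Suc n-k) * a^k * w^(Suc n-k)) = - w * S n"
      unfolding S_def sum_distrib_left by (intro sum.cong refl) (auto simp: Suc_diff_le)
    then show ?thesis
      unfolding S_def by (simp add: sum.atLeast1_atMost_eq add.commute)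
  qed
  have "(w + a) * S n = a * (a^n - (-1)^n * w^n)" for n
  proof (induction n)
    case (Suc n)
    have "(w + a) * S (Suc n) = (w + a) * a^Suc n - w * ((w + a) * S n)"
      unfolding S_Suc by (simp add: algebra_simps)
    then show ?case
      unfolding Suc.IH by (simp add: algebra_simps)
  qed (simp add: S_def)
  then show ?thesis
    unfolding S_def .
qed

lemma sum_choose_mult_choose_diff:
  assumes "i \<le> b"
  shows "(\<Sum>j\<le>i. ((a + j) choose j) * ((b - j) choose (i - j))) = (a + b + 1) choose i"
proof -
  have "(\<Sum>j\<le>i. ((a + j) choose j) * ((i + d - j) choose (i - j))) = (a + i + d + 1) choose i"
    for d i
  proof (induction d arbitrary: i)
    case 0
    have "(\<Sum>j\<le>i. ((a + j) choose j) * ((i - j) choose (i - j))) = (\<Sum>j\<le>i. (a + j) choose j)"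
      by simp
    also have "\<dots> = Suc (a + i) choose i"
      by (rule sum_choose_lower)
    finally show ?case by simp
  next
    case (Suc d)
    note IH_d = Suc.IH
    show ?case
    proof (induction i)
      case (Suc i)
      \<comment> \<open>Pascal's rule on the second factor reduces \<open>(d + 1, i + 1)\<close> to \<open>(d, i + 1)\<close> and \<open>(d + 1, i)\<close>.\<close>
      have "((Suc i + Suc d - j) choose (Suc i - j)) =
          ((Suc i + d - j) choose (Suc i - j)) + (if j \<le> i then (i + Suc d - j) choose (i - j) else 0)"
        if "j \<le> Suc i" for j
        using that by (cases "j \<le> i") (auto simp: Suc_diff_le)
      then have "(\<Sum>j\<le>Suc i. ((a + j) choose j) * ((Suc i + Suc d - j) choose (Suc i - j))) =
          (\<Sum>j\<le>Suc i. ((a + j) choose j) * ((Suc i + d - j) choose (Suc i - j))) +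
          (\<Sum>j\<le>i. ((a + j) choose j) * ((i + Suc d - j) choose (i - j)))"
        by (simp add: sum.distrib[symmetric] distrib_left)
      also have "\<dots> = ((a + Suc i + d + 1) choose Suc i) + ((a + i + Suc d + 1) choose i)"
        by (simp only: Suc.IH IH_d)
      finally show ?case by simp
    qed simp
  qed
  moreover obtain d where "b = i + d"
    using assms le_Suc_ex by blast
  ultimately show ?thesis by (simp add: add.assoc)
qed

lemma triangular_system_unique:
  fixes x y :: "nat \<Rightarrow> 'a::idom" and c :: "nat \<Rightarrow> nat \<Rightarrow> 'a"
  assumes eq: "\<And>i. i < m \<Longrightarrow> (\<Sum>j<m. x j * c j i) = (\<Sum>j<m. y j * c j i)"
    and diag: "\<And>j. j < m \<Longrightarrow> c j j \<noteq> 0"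
    and upper: "\<And>i j. i < j \<Longrightarrow> c j i = 0"
    and "j < m"
  shows "x j = y j"
  using \<open>j < m\<close>
proof (induction j rule: less_induct)
  case (less i)
  have split: "(\<Sum>j<m. z j * c j i) = (\<Sum>j<i. z j * c j i) + z i * c i i" for z
  proof -
    have "(\<Sum>j<m. z j * c j i) = (\<Sum>j<Suc i. z j * c j i)"
      using less.prems by (intro sum.mono_neutral_right) (auto simp: upper)
    then show ?thesis
      by simp
  qed
  have "(\<Sum>j<i. x j * c j i) = (\<Sum>j<i. y j * c j i)"
    using less.IH less.prems by (intro sum.cong) auto
  with eq[OF less.prems] have "x i * c i i = y i * c i i"
    unfolding split by simp
  then show ?case
    using diag[OF less.prems] by simp
qed

lemma sum_smult_monom_even_unique:
  fixes P :: "nat \<Rightarrow> 'a::idom poly"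
  assumes eq: "(\<Sum>j<m. smult (x j) (monom 1 (2*j) * P j)) + R =
      (\<Sum>j<m. smult (y j) (monom 1 (2*j) * P j)) + R'"
    and P0: "\<And>j. j < m \<Longrightarrow> coeff (P j) 0 \<noteq> 0"
    and R: "\<And>i. i < m \<Longrightarrow> coeff R (2*i) = 0"
    and R': "\<And>i. i < m \<Longrightarrow> coeff R' (2*i) = 0"
    and "j < m"
  shows "x j = y j"
proof (rule triangular_system_unique[where c = "\<lambda>j i. coeff (monom 1 (2*j) * P j) (2*i)"])
  fix i assume "i < m"
  then show "(\<Sum>j<m. x j * coeff (monom 1 (2*j) * P j) (2*i)) =
      (\<Sum>j<m. y j * coeff (monom 1 (2*j) * P j) (2*i))"
    using arg_cong[OF eq, of "\<lambda>p. coeff p (2*i)"] R R' by (simp add: coeff_sum)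
qed (use assms in \<open>auto simp: coeff_monom_mult\<close>)

section \<open>Palindromic polynomials\<close>

lemma poly_eq_0_if_zero_at_powers:
  fixes p :: "real poly"
  assumes "t > 0" "t \<noteq> 1" "infinite N" "\<And>n. n \<in> N \<Longrightarrow> poly p (t^n) = 0"
  shows "p = 0"
proof (rule ccontr)
  assume "p \<noteq> 0"
  have "inj_on (\<lambda>n. t^n) N"
    using assms(1,2) by (auto intro: inj_onI simp: power_inject_exp')
  then have "infinite ((\<lambda>n. t^n) ` N)"
    using assms(3) finite_imageD by blast
  moreover have "(\<lambda>n. t^n) ` N \<subseteq> {x. poly p x = 0}"
    using assms(4) by auto
  ultimately show False
    using poly_roots_finite[OF \<open>p \<noteq> 0\<close>] finite_subset by blast
qed

lemma infinite_even_ge_1: "infinite {n::nat. n \<ge> 1 \<and> even n}"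
  unfolding infinite_nat_iff_unbounded_le
proof
  fix m :: nat
  show "\<exists>n\<ge>m. n \<in> {n. n \<ge> 1 \<and> even n}"
    by (rule exI[of _ "2 * Suc m"]) auto
qed

lemma monom_mult_eq_monom_mult_cancel:
  fixes p r :: "'a::idom poly"
  assumes eq: "monom 1 a * p = monom 1 b * r" and "coeff p 0 \<noteq> 0" "coeff r 0 \<noteq> 0"
  shows "a = b" "p = r"
proof -
  have "coeff (monom 1 a * p) k = coeff (monom 1 b * r) k" for k
    using eq by simp
  from this[of "min a b"] show "a = b"
    using assms(2,3) by (cases a b rule: linorder_cases) (auto simp: coeff_monom_mult)
  with eq show "p = r"
    by simp
qed

lemma sym_coeffs_iff_reflect_poly: "sym_coeffs p \<longleftrightarrow> reflect_poly p = p"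
proof
  assume sym: "sym_coeffs p"
  show "reflect_poly p = p"
  proof (rule poly_eqI)
    fix n
    show "coeff (reflect_poly p) n = coeff p n"
      using sym[unfolded sym_coeffs_def, rule_format, of "degree p - n"]
      by (auto simp: coeff_reflect_poly coeff_eq_0)
  qed
next
  assume "reflect_poly p = p"
  then show "sym_coeffs p"
    unfolding sym_coeffs_def by (metis coeff_reflect_poly not_le)
qed

lemma reflect_poly_eq_if_reflection_law:
  fixes p :: "real poly"
  assumes p0: "coeff p 0 \<noteq> 0"
    and law: "\<And>q. 0 < q \<Longrightarrow> q < 1 \<Longrightarrow> q^\<alpha> * poly p q = q^\<beta> * poly p (1/q)"
  shows "reflect_poly p = p"
proof -
  have "monom 1 (\<alpha> + degree p) * p - monom 1 \<beta> * reflect_poly p = 0"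
  proof (rule poly_eq_0_if_zero_at_powers[of "1/2" "{1..}"])
    fix n :: nat assume "n \<in> {1..}"
    then have q: "0 < (1/2::real)^n" "(1/2::real)^n < 1"
      by (auto simp: power_less_one_iff)
    then show "poly (monom 1 (\<alpha> + degree p) * p - monom 1 \<beta> * reflect_poly p) ((1/2)^n) = 0"
      using law[OF q] by (simp add: poly_monom poly_reflect_poly_nz inverse_eq_divide power_add)
  qed (simp_all add: infinite_Ici)
  then have "monom 1 (\<alpha> + degree p) * p = monom 1 \<beta> * reflect_poly p"
    by simp
  moreover have "coeff (reflect_poly p) 0 \<noteq> 0"
    using p0 by auto
  ultimately show ?thesis
    using monom_mult_eq_monom_mult_cancel(2) p0 by metis
qed

lemma sym_coeffs_if_reflection_law:
  fixes p :: "int poly"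
  assumes "coeff p 0 \<noteq> 0"
    and "\<And>q::real. 0 < q \<Longrightarrow> q < 1 \<Longrightarrow> q^\<alpha> * evalp p q = q^\<beta> * evalp p (1/q)"
  shows "sym_coeffs p"
proof -
  let ?r = "map_poly real_of_int p"
  have coeff_r: "coeff ?r i = of_int (coeff p i)" for i
    by (simp add: coeff_map_poly)
  have deg_r: "degree ?r = degree p"
    by (rule degree_map_poly) simp
  have "reflect_poly ?r = ?r"
  proof (rule reflect_poly_eq_if_reflection_law)
    show "coeff ?r 0 \<noteq> 0"
      using assms(1) by (simp add: coeff_r)
    show "q^\<alpha> * poly ?r q = q^\<beta> * poly ?r (1/q)" if "0 < q" "q < 1" for q
      using assms(2)[OF that] unfolding evalp_def .
  qed
  then show ?thesis
    unfolding sym_coeffs_iff_reflect_poly[symmetric] sym_coeffs_def coeff_r of_int_eq_iff deg_r .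
qed

section \<open>The sums \<open>T\<close> as polynomials in \<open>t\<^sup>n\<close>\<close>

definition qint_pair_poly :: "real \<Rightarrow> real poly" where
  "qint_pair_poly q = [:1, 0, -(1 + q), 0, q:]"

lemma poly_qint_pair_poly: "poly (qint_pair_poly q) s = (1 - s^2) * (1 - q * s^2)"
  by (simp add: qint_pair_poly_def algebra_simps power2_eq_square power4_eq_xxxx)

lemma coeff_0_qint_pair_poly_power [simp]: "coeff (qint_pair_poly q ^ k) 0 = 1"
  by (simp add: poly_0_coeff_0[symmetric] poly_qint_pair_poly)

lemma qint_mult_qint_Suc:
  fixes t :: real
  assumes "t > 0" "t \<noteq> 1"
  shows "qint (t^2) n * qint (t^2) (n + 1) = poly (qint_pair_poly (t^2)) (t^n) / (1 - t^2)^2"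
proof -
  have "(t^2)^n = (t^n)^2" "(t^2)^(n + 1) = t^2 * (t^n)^2"
    by (simp_all add: power_mult[symmetric] mult.commute power_add)
  moreover have "1 - t^2 \<noteq> 0"
    using assms by (simp add: power2_eq_1_iff)
  ultimately show ?thesis
    unfolding qint_def poly_qint_pair_poly by (simp add: field_simps power2_eq_square)
qed

lemma qint_inverse:
  fixes q :: real
  assumes "q \<noteq> 0" "q \<noteq> 1" "n \<ge> 1"
  shows "qint (1/q) n = qint q n / q^(n - 1)"
proof -
  obtain k where "n = Suc k"
    using assms(3) by (cases n) auto
  moreover have "1 - q \<noteq> 0" "q - 1 \<noteq> 0"
    using assms by auto
  ultimately show ?thesis
    unfolding qint_def using assms(1) by (simp add: field_simps)
qed

lemma T_inverse:
  fixes t :: real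
  assumes "t > 0" "t \<noteq> 1" "n \<ge> 1"
  shows "T M n (1/t) * t^(2*M*(n - 1)) = T M n t"
  unfolding T_def sum_distrib_right
proof (intro sum.cong refl)
  fix k assume k: "k \<in> {1..n}"
  have q: "t^2 \<noteq> 0" "t^2 \<noteq> 1"
    using assms by (auto simp: power2_eq_1_iff)
  obtain i d where "k = Suc i" "n = Suc i + d"
    using k by (metis atLeastAtMost_iff le_Suc_ex not0_implies_Suc not_one_le_zero)
  then have "2*M*(n - 1) = 2*M*(k - 1) + M*(n - k) + M*(n - k)"
    by (simp add: algebra_simps)
  then have split: "t^(2*M*(n - 1)) = ((t^2)^(k - 1))^M * t^(M*(n - k)) * t^(M*(n - k))"
    by (simp only: power_add) (simp add: power_mult[symmetric] ac_simps)
  have inv: "(1/t)^2 = 1/t^2"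
    by (simp add: power_one_over)
  have "k \<ge> 1"
    using k by simp
  then show "(-1)^(n-k) * qint ((1/t)^2) k ^ M * (1/t)^(M*(n-k)) * t^(2*M*(n - 1)) =
      (-1)^(n-k) * qint (t^2) k ^ M * t^(M*(n-k))"
    unfolding split inv qint_inverse[OF q \<open>k \<ge> 1\<close>] using assms(1)
    by (simp add: field_simps)
qed

definition T_weight :: "nat \<Rightarrow> nat \<Rightarrow> real \<Rightarrow> real" where
  "T_weight M r t = t^(2*r) / (t^M + t^(2*r))"

definition T_poly :: "nat \<Rightarrow> real \<Rightarrow> real poly" where
  "T_poly M t = smult (1 / (1 - t^2)^M)
     (\<Sum>r\<le>M. smult (of_nat (M choose r) * (-1)^r * T_weight M r t) (monom 1 (2*r) - monom 1 M))"

lemma T_eq_binomial_sum: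
  fixes t :: real
  assumes "t > 0" "t \<noteq> 1"
  shows "T M n t = (\<Sum>r\<le>M. of_nat (M choose r) * (-1)^r * T_weight M r t
      * ((t^n)^(2*r) - (-1)^n * (t^n)^M)) / (1 - t^2)^M"
proof -
  have "T M n t = (\<Sum>k=1..n. (-1)^(n-k) * (1 - (t^2)^k)^M * (t^M)^(n-k)) / (1 - t^2)^M"
    unfolding T_def qint_def sum_divide_distrib
    by (intro sum.cong refl) (simp add: power_divide power_mult)
  also have "(\<Sum>k=1..n. (-1)^(n-k) * (1 - (t^2)^k)^M * (t^M)^(n-k)) =
      (\<Sum>k=1..n. \<Sum>r\<le>M. of_nat (M choose r) * (-1)^r * ((-1)^(n-k) * (t^(2*r))^k * (t^M)^(n-k)))"
  proof (intro sum.cong refl)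
    fix k
    have "(1 - (t^2)^k)^M = (\<Sum>r\<le>M. of_nat (M choose r) * (- ((t^2)^k))^r)"
      using binomial_ring[of "- ((t^2)^k)" 1 M] by simp
    also have "\<dots> = (\<Sum>r\<le>M. of_nat (M choose r) * (-1)^r * (t^(2*r))^k)"
      by (simp add: power_minus' power_mult[symmetric] ac_simps)
    finally show "(-1)^(n-k) * (1 - (t^2)^k)^M * (t^M)^(n-k) =
        (\<Sum>r\<le>M. of_nat (M choose r) * (-1)^r * ((-1)^(n-k) * (t^(2*r))^k * (t^M)^(n-k)))"
      by (simp add: sum_distrib_left sum_distrib_right algebra_simps)
  qed
  also have "\<dots> = (\<Sum>r\<le>M. of_nat (M choose r) * (-1)^r *
      (\<Sum>k=1..n. (-1)^(n-k) * (t^(2*r))^k * (t^M)^(n-k)))"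
    by (subst sum.swap) (simp add: sum_distrib_left)
  also have "\<dots> = (\<Sum>r\<le>M. of_nat (M choose r) * (-1)^r * T_weight M r t
      * ((t^n)^(2*r) - (-1)^n * (t^n)^M))"
  proof (intro sum.cong refl)
    fix r
    have "t^M + t^(2*r) \<noteq> 0"
      using assms(1) by (simp add: add_pos_pos order.strict_implies_not_eq[symmetric])
    then have "(\<Sum>k=1..n. (-1)^(n-k) * (t^(2*r))^k * (t^M)^(n-k)) =
        T_weight M r t * ((t^n)^(2*r) - (-1)^n * (t^n)^M)"
      using alternating_sum_powers[of "t^M" "t^(2*r)" n] unfolding T_weight_def
      by (simp add: field_simps power_mult[symmetric])
    then show "of_nat (M choose r) * (-1)^r * (\<Sum>k=1..n. (-1)^(n-k) * (t^(2*r))^k * (t^M)^(n-k)) =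
        of_nat (M choose r) * (-1)^r * T_weight M r t * ((t^n)^(2*r) - (-1)^n * (t^n)^M)"
      by simp
  qed
  finally show ?thesis .
qed

lemma poly_T_poly:
  fixes t :: real
  assumes "t > 0" "t \<noteq> 1" "even n"
  shows "T M n t = poly (T_poly M t) (t^n)"
  unfolding T_eq_binomial_sum[OF assms(1,2)] T_poly_def using assms(3)
  by (simp add: poly_sum poly_monom power_mult[symmetric] ac_simps sum_divide_distrib)

section \<open>Even coefficients as \<open>t\<close> tends to 0\<close>

lemma evalp_0: "evalp p 0 = of_int (coeff p 0)"
  unfolding evalp_def by (simp add: poly_0_coeff_0 coeff_map_poly)

lemma isCont_coeff_mult:
  fixes P Q :: "'a::t2_space \<Rightarrow> 'b::real_normed_field poly"
  assumes "\<And>l. isCont (\<lambda>t. coeff (P t) l) x" "\<And>l. isCont (\<lambda>t. coeff (Q t) l) x"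
  shows "isCont (\<lambda>t. coeff (P t * Q t) l) x"
  unfolding coeff_mult by (intro continuous_intros assms)

lemma isCont_coeff_power:
  fixes P :: "'a::t2_space \<Rightarrow> 'b::real_normed_field poly"
  assumes "\<And>l. isCont (\<lambda>t. coeff (P t) l) x"
  shows "isCont (\<lambda>t. coeff (P t ^ k) l) x"
proof (induction k arbitrary: l)
  case (Suc k)
  then show ?case
    by (simp only: power_Suc) (intro isCont_coeff_mult assms Suc.IH)
qed simp

lemma isCont_coeff_qint_pair_poly:
  "isCont (\<lambda>t. coeff (qint_pair_poly (f t)) l) x" if "isCont f x"
proof -
  have "qint_pair_poly q = [:1, 0, -1:] + smult q [:0, 0, -1, 0, 1:]" for q
    by (simp add: qint_pair_poly_def)
  then show ?thesis
    by (simp only: coeff_add coeff_smult) (intro continuous_intros that)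
qed

lemma coeff_T_poly_even:
  assumes "2*i < M"
  shows "coeff (T_poly M t) (2*i) = of_nat (M choose i) * (-1)^i * T_weight M i t / (1 - t^2)^M"
proof -
  have "(\<Sum>r\<le>M. c r * coeff (monom 1 (2*r) - monom 1 M) (2*i)) = c i" for c :: "nat \<Rightarrow> real"
  proof -
    have "(\<Sum>r\<le>M. c r * coeff (monom 1 (2*r) - monom 1 M) (2*i)) = (\<Sum>r\<le>M. if r = i then c r else 0)"
      using assms by (intro sum.cong) auto
    then show ?thesis
      using assms by simp
  qed
  then show ?thesis
    by (simp only: T_poly_def coeff_smult coeff_sum) simp
qed

lemma tendsto_coeff_T_poly_even:
  assumes "2*i < M"
  shows "((\<lambda>t. coeff (T_poly M t) (2*i)) \<longlongrightarrow> of_nat (M choose i) * (-1)^i) (at_right 0)"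
proof -
  define d where "d = M - 2*i"
  have d: "M = 2*i + d" "d > 0"
    using assms unfolding d_def by auto
  have "((\<lambda>t::real. of_nat (M choose i) * (-1)^i / ((1 + t^d) * (1 - t^2)^M)) \<longlongrightarrow>
      of_nat (M choose i) * (-1)^i / ((1 + 0^d) * (1 - 0^2)^M)) (at_right 0)"
    by (intro tendsto_intros) (simp add: \<open>d > 0\<close> power_0_left)
  then have "((\<lambda>t::real. of_nat (M choose i) * (-1)^i / ((1 + t^d) * (1 - t^2)^M)) \<longlongrightarrow>
      of_nat (M choose i) * (-1)^i) (at_right 0)"
    using \<open>d > 0\<close> by (simp add: power_0_left)
  moreover have "\<forall>\<^sub>F t in at_right 0. of_nat (M choose i) * (-1)^i / ((1 + t^d) * (1 - t^2)^M) =
      coeff (T_poly M t) (2*i)"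
    using eventually_at_right_less[of 0]
  proof eventually_elim
    case (elim t)
    then have "t^(2*i) > 0" "1 + t^d > 0"
      by (simp_all add: add_pos_pos)
    moreover have "t^M + t^(2*i) = t^(2*i) * (1 + t^d)"
      unfolding d power_add by (simp add: algebra_simps)
    ultimately have "T_weight M i t = 1 / (1 + t^d)"
      unfolding T_weight_def using elim by simp
    then show ?case
      unfolding coeff_T_poly_even[OF assms] by simp
  qed
  ultimately show ?thesis
    by (rule Lim_transform_eventually)
qed

lemma coeff_at_0_if_eq_T_poly:
  assumes eq: "\<And>t. 0 < t \<Longrightarrow> t < 1 \<Longrightarrow> P t = T_poly M t"
    and cont: "\<And>l. isCont (\<lambda>t. coeff (P t) l) 0"
    and "2*i < M"
  shows "coeff (P 0) (2*i) = of_nat (M choose i) * (-1)^i"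
proof (rule tendsto_unique[OF trivial_limit_at_right_real])
  show "((\<lambda>t. coeff (P t) (2*i)) \<longlongrightarrow> coeff (P 0) (2*i)) (at_right 0)"
    using cont[of "2*i"] by (simp add: isCont_def filterlim_at_split)
  have "\<forall>\<^sub>F t in at_right 0. 0 < t \<and> t < (1::real)"
    by (subst eventually_at_right[of 0 1]) (auto intro: exI[of _ 1])
  then have "\<forall>\<^sub>F t in at_right 0. coeff (T_poly M t) (2*i) = coeff (P t) (2*i)"
    by eventually_elim (simp add: eq)
  then show "((\<lambda>t. coeff (P t) (2*i)) \<longlongrightarrow> of_nat (M choose i) * (-1)^i) (at_right 0)"
    using tendsto_coeff_T_poly_even[OF \<open>2*i < M\<close>] by (rule Lim_transform_eventually[rotated])
qed

lemma coeff_monom_mult_qint_pair_poly_0_power: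
  "coeff (monom 1 (2*j) * qint_pair_poly 0 ^ k) (2*i) =
    (if j \<le> i then (-1)^(i - j) * of_nat (k choose (i - j)) else 0)"
proof -
  have "qint_pair_poly 0 = monom (-1) 2 + 1"
    by (simp add: poly_eq_poly_eq_iff[symmetric] fun_eq_iff poly_qint_pair_poly poly_monom)
  then have "qint_pair_poly 0 ^ k = (monom (-1) 2 + 1) ^ k"
    by simp
  also have "\<dots> = (\<Sum>l\<le>k. monom (of_nat (k choose l) * (-1)^l) (2*l))"
    unfolding binomial_ring
    by (intro sum.cong refl) (simp add: of_nat_mult_conv_smult monom_power smult_monom mult.commute)
  finally have "coeff (qint_pair_poly 0 ^ k) (2*l) = (-1)^l * of_nat (k choose l)" for l
    by (simp add: coeff_sum mult.commute cong: if_cong)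
  moreover have "2*i - 2*j = 2*(i - j)"
    by simp
  ultimately show ?thesis
    by (simp add: coeff_monom_mult)
qed

text \<open>Letting \<open>t \<rightarrow> 0\<close> shows that \<open>x j = (-1)^j p(0)\<close>, for \<open>p = G\<^sub>m\<^sub>,\<^sub>j\<close> resp. \<open>H\<^sub>m\<^sub>,\<^sub>j\<close>,
  solves this system with \<open>b = m\<close> resp. \<open>b = m - 1\<close>.\<close>

lemma binomial_triangular_system_solution:
  fixes x :: "nat \<Rightarrow> real"
  assumes "m \<le> b + 1"
    and eq: "\<And>i. i < m \<Longrightarrow> (\<Sum>j<m. x j * coeff (monom 1 (2*j) * qint_pair_poly 0 ^ (b - j)) (2*i)) =
        (-1)^i * of_nat ((m + b) choose i)"
    and "j < m"
  shows "x j = (-1)^j * of_nat ((m - 1 + j) choose j)"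
proof (rule triangular_system_unique[where c = "\<lambda>j i. coeff (monom 1 (2*j) * qint_pair_poly 0 ^ (b - j)) (2*i)"
      and y = "\<lambda>j. (-1)^j * of_nat ((m - 1 + j) choose j)"])
  fix i assume "i < m"
  have "(\<Sum>j<m. (-1)^j * of_nat ((m - 1 + j) choose j) *
      coeff (monom 1 (2*j) * qint_pair_poly 0 ^ (b - j)) (2*i)) =
      (\<Sum>j\<le>i. (-1)^i * of_nat (((m - 1 + j) choose j) * ((b - j) choose (i - j))) :: real)"
    unfolding coeff_monom_mult_qint_pair_poly_0_power using \<open>i < m\<close>
    by (intro sum.mono_neutral_cong_right) (auto simp: power_add[symmetric])
  also have "\<dots> = (-1)^i * of_nat (\<Sum>j\<le>i. ((m - 1 + j) choose j) * ((b - j) choose (i - j)))"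
    by (simp add: sum_distrib_left)
  also have "(\<Sum>j\<le>i. ((m - 1 + j) choose j) * ((b - j) choose (i - j))) = (m + b) choose i"
    using \<open>i < m\<close> assms(1) sum_choose_mult_choose_diff[of i b "m - 1"] by simp
  finally show "(\<Sum>j<m. x j * coeff (monom 1 (2*j) * qint_pair_poly 0 ^ (b - j)) (2*i)) =
      (\<Sum>j<m. (-1)^j * of_nat ((m - 1 + j) choose j) *
        coeff (monom 1 (2*j) * qint_pair_poly 0 ^ (b - j)) (2*i))"
    using eq[OF \<open>i < m\<close>] by simp
qed (use assms in \<open>simp_all add: coeff_monom_mult_qint_pair_poly_0_power\<close>)

section \<open>The even identity\<close>

definition G_denom :: "nat \<Rightarrow> nat \<Rightarrow> real \<Rightarrow> real" where
  "G_denom m j q = (\<Prod>i = 0..j. 1 + q^(m - i))"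

definition G_denom_degree :: "nat \<Rightarrow> nat \<Rightarrow> nat" where
  "G_denom_degree m j = (\<Sum>i = 0..j. m - i)"

text \<open>The right-hand side of the even identity with values \<open>a j\<close> in place of \<open>G\<^sub>m\<^sub>,\<^sub>j(t\<^sup>2)\<close>,
  summed over \<open>j = m - k\<close> instead of \<open>k\<close>.\<close>

definition G_rhs :: "nat \<Rightarrow> (nat \<Rightarrow> real) \<Rightarrow> real \<Rightarrow> nat \<Rightarrow> real" where
  "G_rhs m a t n = (\<Sum>j<m. (- ((t^2)^n))^j * a j / G_denom m j (t^2)
      * (qint (t^2) n * qint (t^2) (n + 1))^(m - j))"

definition G_coeff :: "nat \<Rightarrow> (nat \<Rightarrow> real) \<Rightarrow> real \<Rightarrow> nat \<Rightarrow> real" where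
  "G_coeff m a t j = (-1)^j * a j / (G_denom m j (t^2) * (1 - t^2)^(2*(m - j)))"

definition G_rhs_poly :: "nat \<Rightarrow> (nat \<Rightarrow> real) \<Rightarrow> real \<Rightarrow> real poly" where
  "G_rhs_poly m a t = (\<Sum>j<m. smult (G_coeff m a t j) (monom 1 (2*j) * qint_pair_poly (t^2) ^ (m - j)))"

lemma G_identity_iff:
  "G_identity m G \<longleftrightarrow> (\<forall>n\<ge>1. \<forall>t::real. t > 0 \<and> t \<noteq> 1 \<longrightarrow>
    T (2*m) n t = G_rhs m (\<lambda>j. evalp (G j) (t^2)) t n)"
proof -
  have "(\<Sum>k = 1..m. (- ((t^2)^n))^(m - k) * evalp (G (m - k)) (t^2) / (\<Prod>i = 0..m - k. 1 + (t^2)^(m - i))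
      * (qint (t^2) n * qint (t^2) (n + 1))^k) = G_rhs m (\<lambda>j. evalp (G j) (t^2)) t n" for t :: real and n
    unfolding G_rhs_def G_denom_def sum_atLeast1_atMost_reverse by (intro sum.cong refl) auto
  then show ?thesis
    unfolding G_identity_def by (simp only:)
qed

lemma G_denom_pos: "q \<ge> 0 \<Longrightarrow> G_denom m j q > 0"
  unfolding G_denom_def by (intro prod_pos) (simp add: add_pos_nonneg)

lemma G_denom_inverse: "q > 0 \<Longrightarrow> G_denom m j (1/q) = G_denom m j q / q^(G_denom_degree m j)"
  using prod_one_plus_power_inverse[of q "\<lambda>i. m - i" "{0..j}"]
  unfolding G_denom_def G_denom_degree_def by (simp add: field_simps)

lemma poly_G_rhs_poly:
  fixes t :: real
  assumes "t > 0" "t \<noteq> 1"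
  shows "G_rhs m a t n = poly (G_rhs_poly m a t) (t^n)"
  unfolding G_rhs_def G_rhs_poly_def poly_sum
proof (intro sum.cong refl)
  fix j
  have "(- ((t^2)^n))^j = (-1)^j * (t^n)^(2*j)"
    by (simp add: power_minus' power_mult[symmetric] mult.commute mult.left_commute)
  then show "(- ((t^2)^n))^j * a j / G_denom m j (t^2) * (qint (t^2) n * qint (t^2) (n + 1))^(m - j) =
      poly (smult (G_coeff m a t j) (monom 1 (2*j) * qint_pair_poly (t^2) ^ (m - j))) (t^n)"
    unfolding qint_mult_qint_Suc[OF assms] G_coeff_def
    by (simp add: poly_monom power_divide power_mult[symmetric] mult.commute)
qed

lemma G_rhs_unique:
  fixes t :: real
  assumes "t > 0" "t \<noteq> 1"
    and eq: "\<And>n. n \<ge> 1 \<Longrightarrow> even n \<Longrightarrow> G_rhs m a t n = G_rhs m b t n"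
    and "j < m"
  shows "a j = b j"
proof -
  have "G_rhs_poly m a t - G_rhs_poly m b t = 0"
    using assms(1,2) infinite_even_ge_1
    by (rule poly_eq_0_if_zero_at_powers) (simp add: eq poly_G_rhs_poly[OF assms(1,2), symmetric])
  then have "G_rhs_poly m a t + 0 = G_rhs_poly m b t + 0"
    by simp
  then have "G_coeff m a t j = G_coeff m b t j"
    unfolding G_rhs_poly_def by (rule sum_smult_monom_even_unique) (simp_all add: \<open>j < m\<close>)
  moreover have "G_denom m j (t^2) \<noteq> 0" "1 - t^2 \<noteq> 0"
    using G_denom_pos[of "t^2" m j] assms(1,2) by (auto simp: power2_eq_1_iff)
  ultimately show ?thesis
    unfolding G_coeff_def by simp
qed

lemma G_rhs_poly_eq_T_poly:
  assumes "G_identity m G" "t > 0" "t \<noteq> (1::real)"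
  shows "G_rhs_poly m (\<lambda>j. evalp (G j) (t^2)) t = T_poly (2*m) t"
proof -
  have "T_poly (2*m) t - G_rhs_poly m (\<lambda>j. evalp (G j) (t^2)) t = 0"
    using assms(2,3) infinite_even_ge_1
  proof (rule poly_eq_0_if_zero_at_powers)
    fix n :: nat assume "n \<in> {n. n \<ge> 1 \<and> even n}"
    then show "poly (T_poly (2*m) t - G_rhs_poly m (\<lambda>j. evalp (G j) (t^2)) t) (t^n) = 0"
      using assms unfolding G_identity_iff
      by (simp add: poly_T_poly[symmetric] poly_G_rhs_poly[symmetric])
  qed
  then show ?thesis
    by simp
qed

lemma G_rhs_inverse:
  fixes t :: real
  assumes "t > 0" "t \<noteq> 1" "n \<ge> 1"
  shows "G_rhs m a (1/t) n * t^(4*m*(n - 1)) =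
    G_rhs m (\<lambda>j. a j * (t^2)^(G_denom_degree m j + (m - j)) / (t^2)^(2*m)) t n"
  unfolding G_rhs_def sum_distrib_right
proof (intro sum.cong refl)
  fix j assume "j \<in> {..<m}"
  then obtain k where k: "m = j + k"
    using less_imp_add_positive by auto
  obtain n' where n: "n = Suc n'"
    using assms(3) by (cases n) auto
  define q where "q = t^2"
  define y where "y = q^n'"
  define Z where "Z = qint q n * qint q (n + 1)"
  define D where "D = G_denom m j q"
  have q: "q > 0" "q \<noteq> 1" "(1/t)^2 = 1/q"
    using assms unfolding q_def by (auto simp: power2_eq_1_iff power_one_over)
  have y: "y > 0" "q^n = q * y" "(1/q)^n = 1/(q*y)"
    using q unfolding y_def n by (auto simp: power_one_over)
  have Z: "qint (1/q) n * qint (1/q) (n + 1) = Z / (y * (q*y))"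
    using qint_inverse[of q n] qint_inverse[of q "n + 1"] q unfolding Z_def y_def n
    by simp
  have "t^(4*m*(n - 1)) = y^(2*(j + k))"
    unfolding y_def q_def k n by (simp add: power_mult[symmetric] ac_simps)
  moreover have "D > 0"
    unfolding D_def using G_denom_pos q(1) by simp
  moreover have "(-(1/(q*y)))^j * A / (D / q^S) * (Z/(y*(q*y)))^k * y^(2*(j + k)) =
      (-(q*y))^j * (A * q^(S + k) / q^(2*(j + k))) / D * Z^k" for A S
    using q(1) y(1) \<open>D > 0\<close>
    by (simp add: field_simps power_add mult_2 power_minus')
      (simp add: power_mult power2_eq_square ac_simps)
  ultimately show "(- (((1/t)^2)^n))^j * a j / G_denom m j ((1/t)^2)
        * (qint ((1/t)^2) n * qint ((1/t)^2) (n + 1))^(m - j) * t^(4*m*(n - 1)) =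
      (- ((t^2)^n))^j * (a j * (t^2)^(G_denom_degree m j + (m - j)) / (t^2)^(2*m)) / G_denom m j (t^2)
        * (qint (t^2) n * qint (t^2) (n + 1))^(m - j)"
    unfolding q_def[symmetric] q(3) y(2,3) Z G_denom_inverse[OF q(1)] D_def[symmetric] Z_def[symmetric]
    by (simp add: k)
qed

lemma G_reflection_law:
  assumes "G_identity m G" "j < m" "0 < q" "q < (1::real)"
  shows "q^(2*m) * evalp (G j) q = q^(G_denom_degree m j + (m - j)) * evalp (G j) (1/q)"
proof -
  define t where "t = sqrt q"
  have t: "t > 0" "t \<noteq> 1" "1/t > 0" "1/t \<noteq> 1" "t^2 = q" "(1/t)^2 = 1/q"
    using assms(3,4) unfolding t_def by (auto simp: power_one_over)
  have rhs: "T (2*m) n s = G_rhs m (\<lambda>j. evalp (G j) (s^2)) s n" if "n \<ge> 1" "s > 0" "s \<noteq> 1" for n s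
    using assms(1) that unfolding G_identity_iff by blast
  have "evalp (G j) q = evalp (G j) (1/q) * q^(G_denom_degree m j + (m - j)) / q^(2*m)"
  proof (rule G_rhs_unique[OF t(1,2) _ assms(2), unfolded t(5,6)])
    fix n :: nat assume "n \<ge> 1"
    have "G_rhs m (\<lambda>j. evalp (G j) (t^2)) t n = T (2*m) n (1/t) * t^(4*m*(n - 1))"
      using rhs[OF \<open>n \<ge> 1\<close> t(1,2)] T_inverse[OF t(1,2) \<open>n \<ge> 1\<close>, of "2*m"] by simp
    also have "\<dots> = G_rhs m (\<lambda>j. evalp (G j) ((1/t)^2)) (1/t) n * t^(4*m*(n - 1))"
      using rhs[OF \<open>n \<ge> 1\<close> t(3,4)] by (simp add: ac_simps)
    also have "\<dots> = G_rhs m (\<lambda>j. evalp (G j) (1/q) * q^(G_denom_degree m j + (m - j)) / q^(2*m)) t n"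
      unfolding G_rhs_inverse[OF t(1,2) \<open>n \<ge> 1\<close>] t(5,6) ..
    finally show "G_rhs m (\<lambda>j. evalp (G j) q) t n =
        G_rhs m (\<lambda>j. evalp (G j) (1/q) * q^(G_denom_degree m j + (m - j)) / q^(2*m)) t n"
      unfolding t(5) .
  qed
  then show ?thesis
    using assms(3) by (simp add: field_simps)
qed

lemma isCont_coeff_G_rhs_poly:
  assumes "\<And>j. isCont (\<lambda>t. a t j) 0"
  shows "isCont (\<lambda>t. coeff (G_rhs_poly m (a t) t) l) 0"
  unfolding G_rhs_poly_def G_coeff_def G_denom_def coeff_sum coeff_smult
  by (intro continuous_intros isCont_coeff_mult isCont_coeff_power isCont_coeff_qint_pair_poly assms)
    (auto simp: add_nonneg_eq_0_iff power_0_left)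

lemma coeff_0_G_nonzero:
  assumes G: "G_identity m G" and "j < m"
  shows "coeff (G j) 0 \<noteq> 0"
proof -
  let ?a = "\<lambda>t j. evalp (G j) (t^2)"
  have "G_coeff m (?a 0) 0 j = (-1)^j * of_nat ((m - 1 + j) choose j)"
  proof (rule binomial_triangular_system_solution[of m m, OF _ _ \<open>j < m\<close>])
    fix i assume "i < m"
    have "coeff (G_rhs_poly m (?a 0) 0) (2*i) = of_nat ((2*m) choose i) * (-1)^i"
    proof (rule coeff_at_0_if_eq_T_poly)
      show "G_rhs_poly m (?a t) t = T_poly (2*m) t" if "0 < t" "t < 1" for t
        using G_rhs_poly_eq_T_poly[OF G] that by simp
      show "isCont (\<lambda>t. coeff (G_rhs_poly m (?a t) t) l) 0" for l
        unfolding evalp_def by (intro isCont_coeff_G_rhs_poly continuous_intros)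
    qed (use \<open>i < m\<close> in simp)
    then show "(\<Sum>j<m. G_coeff m (?a 0) 0 j * coeff (monom 1 (2*j) * qint_pair_poly 0 ^ (m - j)) (2*i)) =
        (-1)^i * of_nat ((m + m) choose i)"
      unfolding G_rhs_poly_def by (simp add: coeff_sum mult.commute mult_2_right)
  qed simp
  then show ?thesis
    unfolding G_coeff_def G_denom_def by (auto simp: evalp_0)
qed

section \<open>The odd identity\<close>

definition H_denom :: "nat \<Rightarrow> nat \<Rightarrow> real \<Rightarrow> real" where
  "H_denom m j t = (1 + t)^(j + 1) * (\<Prod>i = 0..j. 1 + t^(2*(m - i) - 1))"

definition H_denom_degree :: "nat \<Rightarrow> nat \<Rightarrow> nat" where
  "H_denom_degree m j = (j + 1) + (\<Sum>i = 0..j. 2*(m - i) - 1)"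

definition H_rhs_head :: "nat \<Rightarrow> (nat \<Rightarrow> real) \<Rightarrow> real \<Rightarrow> nat \<Rightarrow> real" where
  "H_rhs_head m a t n = (-1)^(m + n) * a (m - 1) * t^((2*m - 1) * n) / H_denom m (m - 1) t"

definition H_rhs_sum :: "nat \<Rightarrow> (nat \<Rightarrow> real) \<Rightarrow> real \<Rightarrow> nat \<Rightarrow> real" where
  "H_rhs_sum m a t n = (\<Sum>j<m. (- ((t^2)^n))^j * a j
      * (qint (t^2) n * qint (t^2) (n + 1))^(m - 1 - j) / H_denom m j t)"

text \<open>The right-hand side of the odd identity with values \<open>a j\<close> in place of \<open>H\<^sub>m\<^sub>,\<^sub>j(t)\<close>,
  summed over \<open>j = m - k\<close> instead of \<open>k\<close>.\<close>

definition H_rhs :: "nat \<Rightarrow> (nat \<Rightarrow> real) \<Rightarrow> real \<Rightarrow> nat \<Rightarrow> real" where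
  "H_rhs m a t n = H_rhs_head m a t n + (1 - t^(2*n + 1)) / (1 - t) * H_rhs_sum m a t n"

definition H_coeff :: "nat \<Rightarrow> (nat \<Rightarrow> real) \<Rightarrow> real \<Rightarrow> nat \<Rightarrow> real" where
  "H_coeff m a t j = (-1)^j * a j / (H_denom m j t * (1 - t) * (1 - t^2)^(2*(m - 1 - j)))"

definition H_rhs_poly :: "nat \<Rightarrow> (nat \<Rightarrow> real) \<Rightarrow> real \<Rightarrow> real poly" where
  "H_rhs_poly m a t = smult ((-1)^m * a (m - 1) / H_denom m (m - 1) t) (monom 1 (2*m - 1)) +
     (\<Sum>j<m. smult (H_coeff m a t j) (monom 1 (2*j) * ([:1, 0, -t:] * qint_pair_poly (t^2) ^ (m - 1 - j))))"

lemma H_identity_iff: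
  assumes "m \<ge> 1"
  shows "H_identity m H \<longleftrightarrow> (\<forall>n\<ge>1. \<forall>t::real. t > 0 \<and> t \<noteq> 1 \<longrightarrow>
    T (2*m - 1) n t = H_rhs m (\<lambda>j. evalp (H j) t) t n)"
proof -
  have "(\<Sum>k = 1..m. (- ((t^2)^n))^(m - k) * evalp (H (m - k)) t
        * (qint (t^2) n * qint (t^2) (n + 1))^(k - 1)
        / ((1 + t)^(m - k + 1) * (\<Prod>i = 0..m - k. 1 + t^(2*(m - i) - 1)))) =
      H_rhs_sum m (\<lambda>j. evalp (H j) t) t n" for t :: real and n
    unfolding H_rhs_sum_def H_denom_def sum_atLeast1_atMost_reverse
    by (intro sum.cong refl) (auto simp: Suc_diff_Suc)
  moreover have "(1 + t)^m * (\<Prod>i = 0..m - 1. 1 + t^(2*(m - i) - 1)) = H_denom m (m - 1) t" for t :: real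
    using assms by (simp add: H_denom_def)
  ultimately show ?thesis
    unfolding H_identity_def H_rhs_def H_rhs_head_def by (simp only:)
qed

lemma H_denom_pos: "t \<ge> 0 \<Longrightarrow> H_denom m j t > 0"
  unfolding H_denom_def by (intro mult_pos_pos prod_pos) (simp_all add: add_pos_nonneg)

lemma H_denom_inverse: "t > 0 \<Longrightarrow> H_denom m j (1/t) = H_denom m j t / t^(H_denom_degree m j)"
proof -
  assume t: "t > 0"
  have "(\<Prod>i = 0..j. 1 + (1/t)^(2*(m - i) - 1)) * t^(\<Sum>i = 0..j. 2*(m - i) - 1) =
      (\<Prod>i = 0..j. 1 + t^(2*(m - i) - 1))"
    using t by (intro prod_one_plus_power_inverse) simp
  moreover have "(1 + 1/t)^(j + 1) * t^(j + 1) = (1 + t)^(j + 1)"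
    using t by (simp add: power_mult_distrib[symmetric] field_simps)
  ultimately show ?thesis
    unfolding H_denom_def H_denom_degree_def using t by (simp add: field_simps power_add)
qed

lemma poly_H_rhs_poly:
  fixes t :: real
  assumes "t > 0" "t \<noteq> 1" "m \<ge> 1" "even n"
  shows "H_rhs m a t n = poly (H_rhs_poly m a t) (t^n)"
proof -
  have "H_rhs_head m a t n = poly (smult ((-1)^m * a (m - 1) / H_denom m (m - 1) t) (monom 1 (2*m - 1))) (t^n)"
    using assms(4) unfolding H_rhs_head_def
    by (simp add: poly_monom power_add power_mult[symmetric] mult.commute)
  moreover have "(1 - t^(2*n + 1)) / (1 - t) * H_rhs_sum m a t n =
      poly (\<Sum>j<m. smult (H_coeff m a t j) (monom 1 (2*j) * ([:1, 0, -t:] * qint_pair_poly (t^2) ^ (m - 1 - j)))) (t^n)"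
    unfolding H_rhs_sum_def poly_sum sum_distrib_left
  proof (intro sum.cong refl)
    fix j
    have sign: "(- ((t^2)^n))^j = (-1)^j * (t^n)^(2*j)"
      by (simp add: power_minus' power_mult[symmetric] mult.commute mult.left_commute)
    have factor: "1 - t^(2*n + 1) = poly [:1, 0, -t:] (t^n)"
      by (simp add: mult_2 power_add)
    show "(1 - t^(2*n + 1)) / (1 - t) * ((- ((t^2)^n))^j * a j
        * (qint (t^2) n * qint (t^2) (n + 1))^(m - 1 - j) / H_denom m j t) =
      poly (smult (H_coeff m a t j) (monom 1 (2*j) * ([:1, 0, -t:] * qint_pair_poly (t^2) ^ (m - 1 - j)))) (t^n)"
      unfolding qint_mult_qint_Suc[OF assms(1,2)] H_coeff_def sign factor
      by (simp add: poly_monom power_divide power_mult[symmetric] mult.commute mult.left_commute)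
        (simp add: algebra_simps)
  qed
  ultimately show ?thesis
    unfolding H_rhs_def H_rhs_poly_def by simp
qed

lemma H_rhs_unique:
  fixes t :: real
  assumes "t > 0" "t \<noteq> 1" "m \<ge> 1"
    and eq: "\<And>n. n \<ge> 1 \<Longrightarrow> even n \<Longrightarrow> H_rhs m a t n = H_rhs m b t n"
    and "j < m"
  shows "a j = b j"
proof -
  let ?P = "\<lambda>j. [:1, 0, -t:] * qint_pair_poly (t^2) ^ (m - 1 - j)"
  let ?R = "\<lambda>a. smult ((-1)^m * a (m - 1) / H_denom m (m - 1) t) (monom 1 (2*m - 1))"
  have "H_rhs_poly m a t - H_rhs_poly m b t = 0"
    using assms(1,2) infinite_even_ge_1
    by (rule poly_eq_0_if_zero_at_powers) (simp add: eq poly_H_rhs_poly[OF assms(1-3), symmetric])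
  then have "(\<Sum>j<m. smult (H_coeff m a t j) (monom 1 (2*j) * ?P j)) + ?R a =
      (\<Sum>j<m. smult (H_coeff m b t j) (monom 1 (2*j) * ?P j)) + ?R b"
    unfolding H_rhs_poly_def by (simp add: algebra_simps)
  then have "H_coeff m a t j = H_coeff m b t j"
    by (rule sum_smult_monom_even_unique)
      (auto simp: poly_0_coeff_0[symmetric] poly_qint_pair_poly \<open>j < m\<close>)
  moreover have "H_denom m j t \<noteq> 0" "1 - t \<noteq> 0" "1 - t^2 \<noteq> 0"
    using H_denom_pos[of t m j] assms(1,2) by (auto simp: power2_eq_1_iff)
  ultimately show ?thesis
    unfolding H_coeff_def by simp
qed

lemma H_rhs_poly_eq_T_poly:
  assumes "H_identity m H" "m \<ge> 1" "t > 0" "t \<noteq> (1::real)"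
  shows "H_rhs_poly m (\<lambda>j. evalp (H j) t) t = T_poly (2*m - 1) t"
proof -
  have "T_poly (2*m - 1) t - H_rhs_poly m (\<lambda>j. evalp (H j) t) t = 0"
    using assms(3,4) infinite_even_ge_1
  proof (rule poly_eq_0_if_zero_at_powers)
    fix n :: nat assume "n \<in> {n. n \<ge> 1 \<and> even n}"
    then show "poly (T_poly (2*m - 1) t - H_rhs_poly m (\<lambda>j. evalp (H j) t) t) (t^n) = 0"
      using assms unfolding H_identity_iff[OF assms(2)]
      by (simp add: poly_T_poly[symmetric] poly_H_rhs_poly[symmetric])
  qed
  then show ?thesis
    by simp
qed

lemma H_rhs_head_inverse:
  fixes t :: real
  assumes "t > 0" "n \<ge> 1"
  shows "H_rhs_head m a (1/t) n * t^(2*(2*m - 1)*(n - 1)) =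
    H_rhs_head m (\<lambda>j. a j * t^(2*(m - 1 - j) + H_denom_degree m j) / t^(2*(2*m - 1))) t n"
proof -
  define e where "e = 2*m - 1"
  define x where "x = t^(e*n)"
  define y where "y = t^(2*e*(n - 1))"
  define z where "z = t^(2*e)"
  have "2*e*(n - 1) + 2*e = e*n + e*n"
    using assms(2) by (cases n) (simp_all add: algebra_simps)
  then have "y * z = x * x"
    unfolding x_def y_def z_def power_add[symmetric] by (rule arg_cong)
  moreover have "x > 0" "z > 0" "H_denom m (m - 1) t > 0"
    unfolding x_def z_def using assms(1) H_denom_pos by auto
  moreover have "(1/t)^(e*n) = 1/x"
    unfolding x_def by (simp add: power_one_over)
  ultimately show ?thesis
    unfolding H_rhs_head_def H_denom_inverse[OF assms(1)] e_def[symmetric] x_def[symmetric]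
      y_def[symmetric] z_def[symmetric]
    by (simp add: field_simps)
qed

lemma H_rhs_sum_inverse:
  fixes t :: real
  assumes "t > 0" "t \<noteq> 1" "n \<ge> 1"
  shows "H_rhs_sum m a (1/t) n * t^(2*(2*m - 1)*(n - 1)) =
    t^(2*n) * H_rhs_sum m (\<lambda>j. a j * t^(2*(m - 1 - j) + H_denom_degree m j) / t^(2*(2*m - 1))) t n"
  unfolding H_rhs_sum_def sum_distrib_right sum_distrib_left
proof (intro sum.cong refl)
  fix j assume "j \<in> {..<m}"
  then obtain k where k: "m - 1 - j = k" "2*m - 1 = 2*j + 2*k + 1"
    by auto
  obtain n' where n: "n = Suc n'"
    using assms(3) by (cases n) auto
  define q where "q = t^2"
  define y where "y = q^n'"
  define Z where "Z = qint q n * qint q (n + 1)"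
  define D where "D = H_denom m j t"
  define X where "X = t^(H_denom_degree m j)"
  have q: "q > 0" "q \<noteq> 1" "(1/t)^2 = 1/q"
    using assms unfolding q_def by (auto simp: power2_eq_1_iff power_one_over)
  have y: "y > 0" "q^n = q * y" "(1/q)^n = 1/(q*y)"
    using q unfolding y_def n by (auto simp: power_one_over)
  have Z: "qint (1/q) n * qint (1/q) (n + 1) = Z / (y * (q*y))"
    using qint_inverse[of q n] qint_inverse[of q "n + 1"] q unfolding Z_def y_def n
    by simp
  have powers: "t^(2*(2*m - 1)*(n - 1)) = y^(2*j + 2*k + 1)" "t^(2*k) = q^k"
      "t^(2*(2*m - 1)) = q^(2*j + 2*k + 1)"
    unfolding y_def q_def k(2) n power_mult[symmetric] by (simp_all add: algebra_simps mult_2_right)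
  have "t^(2*n) = q * y"
    unfolding y_def q_def n power_mult[symmetric] by (simp add: power_add power2_eq_square)
  have "D > 0"
    unfolding D_def using H_denom_pos assms(1) by simp
  then have "(-(1/(q*y)))^j * A * (Z/(y*(q*y)))^k / (D / X) * y^(2*j + 2*k + 1) =
      q * y * ((-(q*y))^j * (A * (q^k * X) / q^(2*j + 2*k + 1)) * Z^k / D)" for A
    using q(1) y(1)
    by (simp add: field_simps power_add mult_2 power_minus')
      (simp add: power_mult power2_eq_square ac_simps)
  then show "(- (((1/t)^2)^n))^j * a j * (qint ((1/t)^2) n * qint ((1/t)^2) (n + 1))^(m - 1 - j)
        / H_denom m j (1/t) * t^(2*(2*m - 1)*(n - 1)) =
      t^(2*n) * ((- ((t^2)^n))^j * (a j * t^(2*(m - 1 - j) + H_denom_degree m j) / t^(2*(2*m - 1)))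
        * (qint (t^2) n * qint (t^2) (n + 1))^(m - 1 - j) / H_denom m j t)"
    unfolding q_def[symmetric] q(3) y(2,3) Z H_denom_inverse[OF assms(1)] D_def[symmetric]
      X_def[symmetric] Z_def[symmetric] k(1) powers \<open>t^(2*n) = q * y\<close> power_add
    by simp
qed

lemma H_rhs_inverse:
  fixes t :: real
  assumes "t > 0" "t \<noteq> 1" "n \<ge> 1"
  shows "H_rhs m a (1/t) n * t^(2*(2*m - 1)*(n - 1)) =
    H_rhs m (\<lambda>j. a j * t^(2*(m - 1 - j) + H_denom_degree m j) / t^(2*(2*m - 1))) t n"
proof -
  let ?b = "\<lambda>j. a j * t^(2*(m - 1 - j) + H_denom_degree m j) / t^(2*(2*m - 1))"
  let ?E = "t^(2*(2*m - 1)*(n - 1))"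
  have prefactor: "(1 - (1/t)^(2*n + 1)) / (1 - 1/t) = (1 - t^(2*n + 1)) / (1 - t) / t^(2*n)"
    using assms(1,2) by (simp add: field_simps)
  have "H_rhs m a (1/t) n * ?E =
      H_rhs_head m a (1/t) n * ?E + (1 - (1/t)^(2*n + 1)) / (1 - 1/t) * (H_rhs_sum m a (1/t) n * ?E)"
    unfolding H_rhs_def by (simp add: algebra_simps)
  also have "\<dots> = H_rhs_head m ?b t n + (1 - t^(2*n + 1)) / (1 - t) / t^(2*n) * (t^(2*n) * H_rhs_sum m ?b t n)"
    unfolding H_rhs_head_inverse[OF assms(1,3)] H_rhs_sum_inverse[OF assms] prefactor ..
  also have "\<dots> = H_rhs m ?b t n"
    unfolding H_rhs_def using assms(1) by simp
  finally show ?thesis .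
qed

lemma H_reflection_law:
  assumes "H_identity m H" "m \<ge> 1" "j < m" "0 < t" "t < (1::real)"
  shows "t^(2*(2*m - 1)) * evalp (H j) t = t^(2*(m - 1 - j) + H_denom_degree m j) * evalp (H j) (1/t)"
proof -
  have t: "t \<noteq> 1" "1/t > 0" "1/t \<noteq> 1"
    using assms(4,5) by auto
  have rhs: "T (2*m - 1) n s = H_rhs m (\<lambda>j. evalp (H j) s) s n" if "n \<ge> 1" "s > 0" "s \<noteq> 1" for n s
    using assms(1) that unfolding H_identity_iff[OF assms(2)] by blast
  have "evalp (H j) t = evalp (H j) (1/t) * t^(2*(m - 1 - j) + H_denom_degree m j) / t^(2*(2*m - 1))"
  proof (rule H_rhs_unique[OF assms(4) t(1) assms(2) _ assms(3)])
    fix n :: nat assume "n \<ge> 1"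
    have "H_rhs m (\<lambda>j. evalp (H j) t) t n = T (2*m - 1) n (1/t) * t^(2*(2*m - 1)*(n - 1))"
      using rhs[OF \<open>n \<ge> 1\<close> assms(4) t(1)] T_inverse[OF assms(4) t(1) \<open>n \<ge> 1\<close>] by simp
    also have "\<dots> = H_rhs m (\<lambda>j. evalp (H j) (1/t)) (1/t) n * t^(2*(2*m - 1)*(n - 1))"
      using rhs[OF \<open>n \<ge> 1\<close> t(2,3)] by simp
    also have "\<dots> = H_rhs m (\<lambda>j. evalp (H j) (1/t) * t^(2*(m - 1 - j) + H_denom_degree m j)
        / t^(2*(2*m - 1))) t n"
      by (rule H_rhs_inverse[OF assms(4) t(1) \<open>n \<ge> 1\<close>])
    finally show "H_rhs m (\<lambda>j. evalp (H j) t) t n = H_rhs m (\<lambda>j. evalp (H j) (1/t)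
        * t^(2*(m - 1 - j) + H_denom_degree m j) / t^(2*(2*m - 1))) t n" .
  qed
  then show ?thesis
    using assms(4) by (simp add: field_simps)
qed

lemma isCont_coeff_H_rhs_poly:
  assumes "\<And>j. isCont (\<lambda>t. a t j) 0"
  shows "isCont (\<lambda>t. coeff (H_rhs_poly m (a t) t) l) 0"
proof -
  have "isCont (\<lambda>t::real. coeff [:1, 0, -t:] l) 0" for l
  proof -
    have split: "[:1, 0, -t:] = [:1:] + smult t [:0, 0, -1:]" for t :: real
      by simp
    show ?thesis
      unfolding split coeff_add coeff_smult by (intro continuous_intros)
  qed
  then show ?thesis
    unfolding H_rhs_poly_def H_coeff_def H_denom_def coeff_add coeff_sum coeff_smult
    by (intro continuous_intros isCont_coeff_mult isCont_coeff_power isCont_coeff_qint_pair_poly assms)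
      (auto simp: add_nonneg_eq_0_iff power_0_left)
qed

lemma coeff_0_H_nonzero:
  assumes H: "H_identity m H" and "m \<ge> 1" "j < m"
  shows "coeff (H j) 0 \<noteq> 0"
proof -
  let ?a = "\<lambda>t j. evalp (H j) t"
  have "H_coeff m (?a 0) 0 j = (-1)^j * of_nat ((m - 1 + j) choose j)"
  proof (rule binomial_triangular_system_solution[of m "m - 1", OF _ _ \<open>j < m\<close>])
    fix i assume "i < m"
    have "coeff (H_rhs_poly m (?a 0) 0) (2*i) = of_nat ((2*m - 1) choose i) * (-1)^i"
    proof (rule coeff_at_0_if_eq_T_poly)
      show "H_rhs_poly m (?a t) t = T_poly (2*m - 1) t" if "0 < t" "t < 1" for t
        using H_rhs_poly_eq_T_poly[OF H \<open>m \<ge> 1\<close>] that by simp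
      show "isCont (\<lambda>t. coeff (H_rhs_poly m (?a t) t) l) 0" for l
        unfolding evalp_def by (intro isCont_coeff_H_rhs_poly continuous_intros)
    qed (use \<open>i < m\<close> in simp)
    moreover have "m + (m - 1) = 2*m - 1" "2*m - 1 \<noteq> 2*i"
      using \<open>m \<ge> 1\<close> by presburger+
    ultimately show "(\<Sum>j<m. H_coeff m (?a 0) 0 j * coeff (monom 1 (2*j) * qint_pair_poly 0 ^ (m - 1 - j)) (2*i)) =
        (-1)^i * of_nat ((m + (m - 1)) choose i)"
      unfolding H_rhs_poly_def using \<open>i < m\<close> by (simp add: coeff_sum mult.commute)
  qed simp
  then show ?thesis
    unfolding H_coeff_def H_denom_def by (auto simp: evalp_0)
qed

theorem corollary3p7:
  fixes m :: nat and G H :: "nat \<Rightarrow> int poly"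
  assumes "m \<ge> 1"
    and "G_identity m G"
    and "H_identity m H"
  shows "\<forall>k \<le> m - 1. sym_coeffs (G k) \<and> sym_coeffs (H k)"
proof (intro allI impI conjI)
  fix k assume "k \<le> m - 1"
  then have "k < m"
    using assms(1) by simp
  show "sym_coeffs (G k)"
    using coeff_0_G_nonzero[OF assms(2) \<open>k < m\<close>] G_reflection_law[OF assms(2) \<open>k < m\<close>]
    by (rule sym_coeffs_if_reflection_law)
  show "sym_coeffs (H k)"
    using coeff_0_H_nonzero[OF assms(3,1) \<open>k < m\<close>] H_reflection_law[OF assms(3,1) \<open>k < m\<close>]
    by (rule sym_coeffs_if_reflection_law)
qed

end
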